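(* For each integer $k\ge4$, the function $\Phi_k$ has a unique zero in the interval $(\pi/k,\pi/(k-1))$.
   Context: For $\eta\in(0,\pi/3)$ let $|a|=\frac{1}{2\cos\eta}$ and, for an integer $k\ge1$, $\Phi_k(\eta)=(1-|a|^4)\sin((k-1)\eta)-|a|^3\sin((k-2)\eta)+|a|^k\sin\eta$. *)

theory Defs
  imports Complex_Main
begin

definition absa :: "real \<Rightarrow> real" where
  "absa \<eta> = 1 / (2 * cos \<eta>)"

definition Phi :: "nat \<Rightarrow> real \<Rightarrow> real" where
  "Phi k \<eta> = (1 - absa \<eta> ^ 4) * sin ((real k - 1) * \<eta>)
              - absa \<eta> ^ 3 * sin ((real k - 2) * \<eta>)
              + absa \<eta> ^ k * sin \<eta>"

end

theory Submission
  imports Defs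
begin

text \<open>
  Let a = absa \<eta> and \<phi> = (k - 1) \<eta>. Expanding sin ((k - 2) \<eta>) = sin (\<phi> - \<eta>) and using
  a cos \<eta> = 1/2 gives Phi k \<eta> = a^3 sin \<eta> Psi k \<eta>, where
  Psi k \<eta> = B \<eta> sin \<phi> + cos \<phi> + a^(k-3) and B = Psi_sin_coeff, i.e.
  B \<eta> = (1 - a^4 - a^2/2) / (a^3 sin \<eta>).

  For k \<ge> 5 and \<eta> in [pi/k, pi/(k-1)] we have a^2 \<le> 1/2 and pi - \<phi> in [0, pi/k].
  Psi k is positive at pi/k (there B sin \<eta> \<ge> 1) and negative at pi/(k-1) (there \<phi> = pi
  and a < 1). It is strictly decreasing: B sin \<phi> falls at rate at least (k-1)^2/8, because
  B decreases, B \<ge> 1/\<eta> > (k-1)/4 and cos (pi - \<phi>) \<ge> 1/2; cos \<phi> falls; and a^(k-3)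
  rises at rate at most k - 3 \<le> (k-1)^2/8.

  For k = 4, Phi 4 is a positive multiple of 8 cos^4 \<eta> - 1 on (pi/4, pi/3).
\<close>

lemma unique_zero_if_strict_antimono:
  fixes f :: "real \<Rightarrow> real"
  assumes "a < b" "continuous_on {a..b} f" "f b < 0" "0 < f a"
    and antimono: "\<And>x y. a \<le> x \<Longrightarrow> x < y \<Longrightarrow> y \<le> b \<Longrightarrow> f y < f x"
  shows "\<exists>!x. x \<in> {a<..<b} \<and> f x = 0"
proof -
  obtain x where x: "a \<le> x" "x \<le> b" "f x = 0"
    using IVT2'[of f b 0 a] assms(1-4) by auto
  have "x \<in> {a<..<b}" using x assms(3,4) by (auto simp: order.order_iff_strict)
  moreover have "y = x" if "y \<in> {a<..<b}" "f y = 0" for y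
    using antimono[of x y] antimono[of y x] that x by (cases x y rule: linorder_cases) auto
  ultimately show ?thesis using x(3) by blast
qed

lemma sin_diff_ge_half:
  fixes x y :: real
  assumes "0 \<le> y" "y \<le> x" "x \<le> pi / 3"
  shows "(x - y) / 2 \<le> sin x - sin y"
proof (cases "y = x")
  case False
  then obtain z where z: "y < z" "z < x" "sin x - sin y = (x - y) * cos z"
    using MVT2[of y x sin cos] assms by (auto intro: DERIV_sin)
  have "cos (pi / 3) \<le> cos z"
    using z assms by (intro cos_monotone_0_pi_le) auto
  then have "(x - y) * (1 / 2) \<le> (x - y) * cos z"
    using assms by (intro mult_left_mono) (auto simp: cos_60)
  then show ?thesis using z by simp
qed simp

lemma cos_diff_le:
  fixes x y :: real
  assumes "y \<le> x"
  shows "cos y - cos x \<le> x - y"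
proof (cases "y = x")
  case False
  then obtain z where z: "y < z" "z < x" "cos x - cos y = (x - y) * - sin z"
    using MVT2[of y x cos "\<lambda>t. - sin t"] assms by (auto intro: DERIV_cos)
  have "(x - y) * sin z \<le> (x - y) * 1"
    using assms by (intro mult_left_mono) auto
  then show ?thesis using z(3) by (simp add: algebra_simps)
qed simp

lemma power_diff_le_mult:
  fixes x y :: real
  assumes "0 \<le> y" "y \<le> x" "x \<le> 1"
  shows "x ^ n - y ^ n \<le> real n * (x - y)"
proof (induction n)
  case (Suc n)
  have "x ^ Suc n - y ^ Suc n = x * (x ^ n - y ^ n) + (x - y) * y ^ n"
    by (simp add: algebra_simps)
  also have "\<dots> \<le> 1 * (real n * (x - y)) + (x - y) * 1"
    using assms Suc by (intro add_mono mult_mono) (auto simp: power_mono power_le_one)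
  finally show ?case by (simp add: algebra_simps)
qed simp

lemma sqrt2_half_le_cos:
  fixes \<eta> :: real
  assumes "0 \<le> \<eta>" "\<eta> \<le> pi / 4"
  shows "sqrt 2 / 2 \<le> cos \<eta>"
  using cos_monotone_0_pi_le[of \<eta> "pi / 4"] assms by (simp add: cos_45)

lemma absa_pos:
  fixes \<eta> :: real
  assumes "- (pi / 2) < \<eta>" "\<eta> < pi / 2"
  shows "0 < absa \<eta>"
  using cos_gt_zero_pi[OF assms] by (simp add: absa_def)

lemma absa_sq_le_half:
  fixes \<eta> :: real
  assumes "0 \<le> \<eta>" "\<eta> \<le> pi / 4"
  shows "absa \<eta> ^ 2 \<le> 1 / 2"
proof -
  have c: "sqrt 2 / 2 \<le> cos \<eta>" using assms by (rule sqrt2_half_le_cos)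
  have "(sqrt 2 / 2) ^ 2 \<le> cos \<eta> ^ 2" using c by (intro power_mono) auto
  moreover have "0 < cos \<eta>" by (rule less_le_trans[OF _ c]) simp
  ultimately show ?thesis by (simp add: absa_def power_divide power_mult_distrib field_simps)
qed

lemma absa_less_one:
  fixes \<eta> :: real
  assumes "0 \<le> \<eta>" "\<eta> \<le> pi / 4"
  shows "absa \<eta> < 1"
  using absa_sq_le_half[OF assms] one_le_power[of "absa \<eta>" 2] by linarith

lemma absa_strict_mono:
  fixes x y :: real
  assumes "0 \<le> x" "x < y" "y < pi / 2"
  shows "absa x < absa y"
proof -
  have "cos y < cos x" "0 < cos y"
    using assms by (auto intro: cos_monotone_0_pi cos_gt_zero_pi)
  then show ?thesis by (simp add: absa_def field_simps)
qed

lemma absa_diff_le: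
  fixes x y :: real
  assumes "0 \<le> x" "x \<le> y" "y \<le> pi / 4"
  shows "absa y - absa x \<le> y - x"
proof -
  have cx: "sqrt 2 / 2 \<le> cos x" and cy: "sqrt 2 / 2 \<le> cos y"
    using sqrt2_half_le_cos[of x] sqrt2_half_le_cos[of y] assms by linarith+
  have "1 / 2 = (sqrt 2 / 2) * (sqrt 2 / 2)" by simp
  also have "\<dots> \<le> cos x * cos y"
    using cx cy by (intro mult_mono) (auto intro: order_trans[OF _ cx])
  finally have cxy: "1 / 2 \<le> cos x * cos y" .
  have "0 < cos x" "0 < cos y" using cx cy real_sqrt_gt_zero[of 2] by linarith+
  have "cos y \<le> cos x" using assms by (intro cos_monotone_0_pi_le) auto
  have "absa y - absa x = (cos x - cos y) / (2 * (cos x * cos y))"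
    using \<open>0 < cos x\<close> \<open>0 < cos y\<close> by (simp add: absa_def field_simps)
  also have "\<dots> \<le> (cos x - cos y) / 1"
    using cxy \<open>cos y \<le> cos x\<close> by (intro divide_left_mono) auto
  also have "\<dots> \<le> y - x" using cos_diff_le[OF assms(2)] by simp
  finally show ?thesis .
qed

lemma absa_power_diff_le:
  fixes x y :: real
  assumes "0 \<le> x" "x \<le> y" "y \<le> pi / 4"
  shows "absa y ^ n - absa x ^ n \<le> real n * (y - x)"
proof -
  have "0 < absa x" using assms pi_gt_zero by (intro absa_pos) linarith+
  moreover have "absa x \<le> absa y"
    using assms absa_strict_mono[of x y] by (cases "x = y") auto
  moreover have "absa y < 1" using assms by (intro absa_less_one) auto
  ultimately have "absa y ^ n - absa x ^ n \<le> real n * (absa y - absa x)"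
    by (intro power_diff_le_mult) auto
  also have "\<dots> \<le> real n * (y - x)"
    using absa_diff_le[OF assms] by (intro mult_left_mono) auto
  finally show ?thesis .
qed

definition Psi_sin_coeff :: "real \<Rightarrow> real" where
  "Psi_sin_coeff \<eta> = (1 - absa \<eta> ^ 4 - absa \<eta> ^ 2 / 2) / (absa \<eta> ^ 3 * sin \<eta>)"

definition Psi :: "nat \<Rightarrow> real \<Rightarrow> real" where
  "Psi k \<eta> =
    sin ((real k - 1) * \<eta>) * Psi_sin_coeff \<eta> + cos ((real k - 1) * \<eta>) + absa \<eta> ^ (k - 3)"

lemma Phi_eq_Psi:
  fixes \<eta> :: real
  assumes "3 \<le> k" "cos \<eta> \<noteq> 0" "sin \<eta> \<noteq> 0"
  shows "Phi k \<eta> = absa \<eta> ^ 3 * sin \<eta> * Psi k \<eta>"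
proof -
  define \<phi> where "\<phi> = (real k - 1) * \<eta>"
  have "(real k - 2) * \<eta> = \<phi> - \<eta>" unfolding \<phi>_def by (simp add: algebra_simps)
  then have sin_k2: "sin ((real k - 2) * \<eta>) = sin \<phi> * cos \<eta> - cos \<phi> * sin \<eta>"
    by (simp add: sin_diff)
  have "absa \<eta> * cos \<eta> = 1 / 2" using assms(2) by (simp add: absa_def)
  then have cube: "absa \<eta> ^ 3 * cos \<eta> = absa \<eta> ^ 2 / 2"
    by (simp add: power3_eq_cube power2_eq_square)
  have pow_k: "absa \<eta> ^ k = absa \<eta> ^ 3 * absa \<eta> ^ (k - 3)"
    using assms(1) by (simp flip: power_add)
  have "Phi k \<eta> = sin \<phi> * (1 - absa \<eta> ^ 4) - sin \<phi> * (absa \<eta> ^ 3 * cos \<eta>)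
      + absa \<eta> ^ 3 * sin \<eta> * (cos \<phi> + absa \<eta> ^ (k - 3))"
    unfolding Phi_def \<phi>_def[symmetric] sin_k2 pow_k by (simp add: algebra_simps)
  also have "\<dots> = absa \<eta> ^ 3 * sin \<eta> * Psi k \<eta>"
    using assms(2,3) unfolding cube Psi_def Psi_sin_coeff_def \<phi>_def[symmetric]
    by (simp add: absa_def field_simps)
  finally show ?thesis .
qed

lemma cube_le_Psi_numerator:
  fixes a :: real
  assumes "0 \<le> a" "a ^ 2 \<le> 1 / 2"
  shows "a ^ 3 \<le> 1 - a ^ 4 - a ^ 2 / 2"
proof -
  have "a \<le> 1" using assms one_le_power[of a 2] by linarith
  then have "a ^ 3 \<le> a ^ 2" using assms(1) by (intro power_decreasing) auto
  moreover have "a ^ 4 \<le> (1 / 2) ^ 2"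
    using assms power_mono[of "a ^ 2" "1 / 2" 2] by (simp flip: power_mult)
  ultimately show ?thesis using assms(2) by (simp add: power2_eq_square)
qed

lemma one_le_sin_mult_Psi_sin_coeff:
  fixes \<eta> :: real
  assumes "0 < \<eta>" "\<eta> \<le> pi / 4"
  shows "1 \<le> sin \<eta> * Psi_sin_coeff \<eta>"
proof -
  have a: "0 < absa \<eta>" using assms pi_gt_zero by (intro absa_pos) linarith+
  have "sin \<eta> > 0" using assms pi_gt_zero by (intro sin_gt_zero) linarith+
  moreover have "absa \<eta> ^ 3 \<le> 1 - absa \<eta> ^ 4 - absa \<eta> ^ 2 / 2"
    using a absa_sq_le_half[of \<eta>] assms by (intro cube_le_Psi_numerator) auto
  ultimately show ?thesis using a by (simp add: Psi_sin_coeff_def)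
qed

lemma Psi_sin_coeff_antimono:
  fixes x y :: real
  assumes "0 < x" "x \<le> y" "y \<le> pi / 4"
  shows "Psi_sin_coeff y \<le> Psi_sin_coeff x"
proof -
  have ax: "0 < absa x" using assms pi_gt_zero by (intro absa_pos) linarith+
  have axy: "absa x \<le> absa y"
    using assms absa_strict_mono[of x y] pi_gt_zero by (cases "x = y") auto
  have sx: "0 < sin x" using assms pi_gt_zero by (intro sin_gt_zero) linarith+
  have sxy: "sin x \<le> sin y" using assms by (intro sin_monotone_2pi_le) auto
  have "absa y ^ 3 \<le> 1 - absa y ^ 4 - absa y ^ 2 / 2"
    using ax axy absa_sq_le_half[of y] assms by (intro cube_le_Psi_numerator) auto
  moreover have "0 < absa y ^ 3" using ax axy by simp
  moreover have "absa x ^ 4 \<le> absa y ^ 4" "absa x ^ 2 \<le> absa y ^ 2"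
    using ax axy by (auto intro: power_mono)
  ultimately have num: "0 \<le> 1 - absa x ^ 4 - absa x ^ 2 / 2"
    "1 - absa y ^ 4 - absa y ^ 2 / 2 \<le> 1 - absa x ^ 4 - absa x ^ 2 / 2"
    by linarith+
  have den: "absa x ^ 3 * sin x \<le> absa y ^ 3 * sin y"
    using ax axy sx sxy by (intro mult_mono power_mono) auto
  show ?thesis
    unfolding Psi_sin_coeff_def using ax sx by (intro frac_le[OF num _ den]) auto
qed

lemma pi_div_interval_bounds:
  fixes \<eta> :: real
  assumes "5 \<le> k" "pi / real k \<le> \<eta>" "\<eta> \<le> pi / (real k - 1)"
  shows "0 < \<eta>" "\<eta> \<le> pi / 4"
proof -
  have "0 < pi / real k" using assms by simp
  then show "0 < \<eta>" using assms by linarith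
  have "pi / (real k - 1) \<le> pi / 4" using assms by (intro divide_left_mono) auto
  then show "\<eta> \<le> pi / 4" using assms by linarith
qed

lemma inverse_le_Psi_sin_coeff:
  fixes \<eta> :: real
  assumes "0 < \<eta>" "\<eta> \<le> pi / 4"
  shows "1 / \<eta> \<le> Psi_sin_coeff \<eta>"
proof -
  have "0 < sin \<eta>" using assms pi_gt_zero by (intro sin_gt_zero) linarith+
  moreover have "sin \<eta> \<le> \<eta>" using assms by (intro sin_x_le_x) auto
  ultimately have "1 / \<eta> \<le> 1 / sin \<eta>" by (intro divide_left_mono) auto
  also have "\<dots> \<le> Psi_sin_coeff \<eta>"
    using one_le_sin_mult_Psi_sin_coeff[OF assms] \<open>0 < sin \<eta>\<close> by (simp add: field_simps)
  finally show ?thesis .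
qed

lemma Psi_sin_term_diff_ge:
  fixes x y :: real
  assumes k: "5 \<le> k" and xy: "pi / real k \<le> x" "x < y" "y \<le> pi / (real k - 1)"
  shows "(real k - 1) ^ 2 / 8 * (y - x)
    \<le> sin ((real k - 1) * x) * Psi_sin_coeff x - sin ((real k - 1) * y) * Psi_sin_coeff y"
proof -
  define K where "K = real k"
  have K: "5 \<le> K" using k by (simp add: K_def)
  have x_pos: "0 < x" and y_le: "y \<le> pi / 4"
    using pi_div_interval_bounds[OF k] xy by auto
  note xy = xy[folded K_def]
  define tx ty where "tx = pi - (K - 1) * x" and "ty = pi - (K - 1) * y"
  have "(K - 1) * (pi / K) \<le> (K - 1) * x" using xy K by (intro mult_left_mono) auto
  moreover have "pi - (K - 1) * (pi / K) = pi / K" using K by (simp add: field_simps)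
  ultimately have "tx \<le> pi / K" unfolding tx_def by linarith
  moreover have "pi / K \<le> pi / 3" using K by (intro divide_left_mono) auto
  ultimately have tx_le: "tx \<le> pi / 3" by linarith
  have ty_ge: "0 \<le> ty" using xy K by (simp add: ty_def field_simps)
  have tx_ty: "tx - ty = (K - 1) * (y - x)" by (simp add: tx_def ty_def algebra_simps)
  have gap: "0 < (K - 1) * (y - x)" using xy K by (intro mult_pos_pos) auto
  have sin_diff: "(K - 1) * (y - x) / 2 \<le> sin tx - sin ty"
    using sin_diff_ge_half[OF ty_ge _ tx_le] tx_ty gap by simp
  have "0 \<le> sin tx" using ty_ge tx_ty gap tx_le pi_gt_zero by (intro sin_ge_zero) linarith+
  have coeff_mono: "Psi_sin_coeff y \<le> Psi_sin_coeff x"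
    using x_pos xy y_le by (intro Psi_sin_coeff_antimono) auto
  have "(K - 1) / 4 \<le> (K - 1) / pi" using K pi_less_4 by (intro divide_left_mono) auto
  also have "\<dots> \<le> 1 / y" using xy K x_pos by (simp add: field_simps)
  also have "\<dots> \<le> Psi_sin_coeff y"
    using x_pos xy y_le by (intro inverse_le_Psi_sin_coeff) auto
  finally have coeff_ge: "(K - 1) / 4 \<le> Psi_sin_coeff y" .
  have "(K - 1) ^ 2 / 8 * (y - x) = (K - 1) * (y - x) / 2 * ((K - 1) / 4)"
    by (simp add: power2_eq_square)
  also have "\<dots> \<le> (sin tx - sin ty) * Psi_sin_coeff y"
    using sin_diff coeff_ge gap K by (intro mult_mono) auto
  also have "\<dots> \<le> sin tx * Psi_sin_coeff x - sin ty * Psi_sin_coeff y"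
    using mult_left_mono[OF coeff_mono \<open>0 \<le> sin tx\<close>] by (simp add: algebra_simps)
  finally show ?thesis by (simp add: tx_def ty_def K_def)
qed

lemma Psi_strict_antimono:
  fixes x y :: real
  assumes k: "5 \<le> k" and xy: "pi / real k \<le> x" "x < y" "y \<le> pi / (real k - 1)"
  shows "Psi k y < Psi k x"
proof -
  define K where "K = real k"
  have K: "5 \<le> K" using k by (simp add: K_def)
  have x_pos: "0 < x" and y_le: "y \<le> pi / 4"
    using pi_div_interval_bounds[OF k] xy by auto
  have sin_term: "(K - 1) ^ 2 / 8 * (y - x)
      \<le> sin ((K - 1) * x) * Psi_sin_coeff x - sin ((K - 1) * y) * Psi_sin_coeff y"
    using Psi_sin_term_diff_ge[OF k xy] by (simp add: K_def)
  have "(K - 1) * y \<le> pi" using xy K by (simp add: K_def field_simps)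
  then have cos_term: "cos ((K - 1) * y) < cos ((K - 1) * x)"
    using x_pos xy K by (intro cos_monotone_0_pi) auto
  have "absa y ^ (k - 3) - absa x ^ (k - 3) \<le> real (k - 3) * (y - x)"
    using x_pos xy y_le by (intro absa_power_diff_le) auto
  also have "\<dots> \<le> (K - 1) ^ 2 / 8 * (y - x)"
  proof (rule mult_right_mono)
    have "0 \<le> (K - 5) ^ 2" by simp
    then show "real (k - 3) \<le> (K - 1) ^ 2 / 8"
      using k by (simp add: K_def of_nat_diff power2_eq_square algebra_simps)
  qed (use xy in simp)
  finally have "absa y ^ (k - 3) - absa x ^ (k - 3) \<le> (K - 1) ^ 2 / 8 * (y - x)" .
  with sin_term cos_term show ?thesis unfolding Psi_def K_def by linarith
qed

lemma Psi_left_pos: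
  assumes "4 \<le> k"
  shows "0 < Psi k (pi / real k)"
proof -
  define \<eta> where "\<eta> = pi / real k"
  have \<eta>: "0 < \<eta>" "\<eta> \<le> pi / 4"
    unfolding \<eta>_def using assms by (simp, intro divide_left_mono) auto
  have "(real k - 1) * \<eta> = pi - \<eta>" using assms by (simp add: \<eta>_def field_simps)
  then have "Psi k \<eta> = sin \<eta> * Psi_sin_coeff \<eta> - cos \<eta> + absa \<eta> ^ (k - 3)"
    by (simp add: Psi_def)
  moreover have "1 \<le> sin \<eta> * Psi_sin_coeff \<eta>"
    using \<eta> by (rule one_le_sin_mult_Psi_sin_coeff)
  moreover have "0 < absa \<eta>" using \<eta> pi_gt_zero by (intro absa_pos) linarith+
  then have "0 < absa \<eta> ^ (k - 3)" by simp
  ultimately show ?thesis using cos_le_one[of \<eta>] unfolding \<eta>_def by linarith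
qed

lemma Psi_right_neg:
  assumes "5 \<le> k"
  shows "Psi k (pi / (real k - 1)) < 0"
proof -
  define \<eta> where "\<eta> = pi / (real k - 1)"
  have \<eta>: "0 < \<eta>" "\<eta> \<le> pi / 4"
    unfolding \<eta>_def using assms by (simp, intro divide_left_mono) auto
  have "(real k - 1) * \<eta> = pi" using assms by (simp add: \<eta>_def)
  then have "Psi k \<eta> = absa \<eta> ^ (k - 3) - 1" by (simp add: Psi_def)
  moreover have "0 < absa \<eta>" using \<eta> pi_gt_zero by (intro absa_pos) linarith+
  moreover have "absa \<eta> < 1" using \<eta> by (intro absa_less_one) auto
  ultimately show ?thesis using assms by (simp add: \<eta>_def power_less_one_iff)
qed

lemma continuous_on_Psi: "continuous_on {0<..<pi / 2} (Psi k)"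
proof -
  have "sin \<eta> \<noteq> 0" "cos \<eta> \<noteq> 0" if "\<eta> \<in> {0<..<pi / 2}" for \<eta>
    using that sin_gt_zero[of \<eta>] cos_gt_zero_pi[of \<eta>] by auto
  then show ?thesis
    unfolding Psi_def[abs_def] Psi_sin_coeff_def absa_def by (intro continuous_intros) auto
qed

lemma Psi_unique_zero:
  assumes "5 \<le> k"
  shows "\<exists>!\<eta>. \<eta> \<in> {pi / real k <..< pi / (real k - 1)} \<and> Psi k \<eta> = 0"
proof (rule unique_zero_if_strict_antimono)
  show "pi / real k < pi / (real k - 1)" using assms by (intro divide_strict_left_mono) auto
  have "{pi / real k .. pi / (real k - 1)} \<subseteq> {0<..<pi / 2}"
    using pi_div_interval_bounds[OF assms] pi_gt_zero by fastforce
  then show "continuous_on {pi / real k .. pi / (real k - 1)} (Psi k)"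
    by (rule continuous_on_subset[OF continuous_on_Psi])
qed (use assms Psi_left_pos Psi_right_neg Psi_strict_antimono in auto)

lemma Phi_eq_0_iff_Psi_eq_0:
  fixes \<eta> :: real
  assumes "3 \<le> k" "\<eta> \<in> {0<..<pi / 2}"
  shows "Phi k \<eta> = 0 \<longleftrightarrow> Psi k \<eta> = 0"
proof -
  have "0 < cos \<eta>" "0 < sin \<eta>" using assms by (auto intro: cos_gt_zero_pi sin_gt_zero)
  moreover have "0 < absa \<eta>" using assms by (intro absa_pos) auto
  ultimately show ?thesis using Phi_eq_Psi[OF assms(1)] by simp
qed

lemma Phi_4_eq:
  fixes \<eta> :: real
  assumes "cos \<eta> \<noteq> 0"
  shows "Phi 4 \<eta> = sin \<eta> * (4 * cos \<eta> ^ 2 - 1) / (8 * cos \<eta> ^ 4) * (8 * cos \<eta> ^ 4 - 1)"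
proof -
  have "sin (3 * \<eta>) = sin (2 * \<eta> + \<eta>)" by simp
  also have "\<dots> = sin \<eta> * (4 * cos \<eta> ^ 2 - 1)"
    unfolding sin_add sin_double cos_double_cos by (simp add: algebra_simps power2_eq_square)
  finally have sin_3: "sin (3 * \<eta>) = sin \<eta> * (4 * cos \<eta> ^ 2 - 1)" .
  have "Phi 4 \<eta> = (1 - absa \<eta> ^ 4) * sin (3 * \<eta>) - absa \<eta> ^ 3 * sin (2 * \<eta>) + absa \<eta> ^ 4 * sin \<eta>"
    by (simp add: Phi_def)
  also have "\<dots> = sin \<eta> * (4 * cos \<eta> ^ 2 - 1) / (8 * cos \<eta> ^ 4) * (8 * cos \<eta> ^ 4 - 1)"
    unfolding sin_3 sin_double absa_def using assms
    by (simp add: field_simps power_divide) (simp add: algebra_simps eval_nat_numeral)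
  finally show ?thesis .
qed

lemma Phi_4_eq_0_iff:
  fixes \<eta> :: real
  assumes "pi / 4 < \<eta>" "\<eta> < pi / 3"
  shows "Phi 4 \<eta> = 0 \<longleftrightarrow> 8 * cos \<eta> ^ 4 - 1 = 0"
proof -
  have "cos (pi / 3) < cos \<eta>" using assms by (intro cos_monotone_0_pi) auto
  then have "1 / 2 < cos \<eta>" by (simp add: cos_60)
  then have "1 < 4 * cos \<eta> ^ 2"
    using power_strict_mono[of "1 / 2" "cos \<eta>" 2] by (simp add: power_divide)
  moreover have "0 < sin \<eta>" using assms by (intro sin_gt_zero) auto
  ultimately show ?thesis using Phi_4_eq[of \<eta>] \<open>1 / 2 < cos \<eta>\<close> by simp
qed

lemma cos_pow_4_unique_zero: "\<exists>!\<eta>. \<eta> \<in> {pi / 4 <..< pi / 3} \<and> 8 * cos \<eta> ^ 4 - 1 = (0::real)"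
proof (rule unique_zero_if_strict_antimono)
  have "cos (pi / 4) ^ 4 = (sqrt 2 / 2) ^ 4" by (simp add: cos_45)
  then show "0 < 8 * cos (pi / 4) ^ 4 - (1::real)" by (simp add: power_divide eval_nat_numeral)
  show "8 * cos (pi / 3) ^ 4 - 1 < (0::real)" by (simp add: cos_60 eval_nat_numeral)
  show "continuous_on {pi / 4 .. pi / 3} (\<lambda>\<eta>. 8 * cos \<eta> ^ 4 - 1)"
    by (intro continuous_intros)
  fix x y :: real
  assume "pi / 4 \<le> x" "x < y" "y \<le> pi / 3"
  then have "0 < cos y" "cos y < cos x" by (auto intro: cos_gt_zero_pi cos_monotone_0_pi)
  then show "8 * cos y ^ 4 - 1 < 8 * cos x ^ 4 - 1" by (simp add: power_strict_mono)
qed simp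

theorem lemma4p2:
  fixes k :: nat
  assumes "k \<ge> 4"
  shows "\<exists>!\<eta>. \<eta> \<in> {pi / real k <..< pi / (real k - 1)} \<and> Phi k \<eta> = 0"
proof -
  consider "k = 4" | "5 \<le> k" using assms by linarith
  then show ?thesis
  proof cases
    case 1
    then show ?thesis using cos_pow_4_unique_zero Phi_4_eq_0_iff by auto
  next
    case 2
    have "Phi k \<eta> = 0 \<longleftrightarrow> Psi k \<eta> = 0"
      if "\<eta> \<in> {pi / real k <..< pi / (real k - 1)}" for \<eta>
    proof (rule Phi_eq_0_iff_Psi_eq_0)
      show "\<eta> \<in> {0<..<pi / 2}" using that pi_div_interval_bounds[OF 2, of \<eta>] by auto
    qed (use 2 in simp)
    then show ?thesis using Psi_unique_zero[OF 2] by auto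
  qed
qed

end
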